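(* Let $H$ be a Hermitian operator on a $d$-dimensional Hilbert space with spectral decomposition $H=\sum_{i=1}^M\lambda_i\Pi_i$, where $M\ge 2$, $\lambda_M>\cdots>\lambda_1$ are the distinct eigenvalues and $\Pi_i$ the spectral projections. Let $\Delta=\lambda_2-\lambda_1$, $d_G=\operatorname{Tr}[\Pi_1]$, and $\varepsilon\in(0,1)$. If $$\beta=\frac{1}{\Delta}\ln\!\left[\left(\frac{1-\varepsilon}{\varepsilon}\right)\left(\frac{d-d_G}{d_G}\right)\right]$$ and $\beta\ge 0$, then $$F\!\left(\frac{e^{-\beta H}}{\operatorname{Tr}[e^{-\beta H}]},\frac{\Pi_1}{\operatorname{Tr}[\Pi_1]}\right)\ge 1-\varepsilon.$$
   Context: The fidelity of states $\rho,\sigma$ is $F(\rho,\sigma)=\|\sqrt{\rho}\sqrt{\sigma}\|_1^2$, where $\|A\|_1=\operatorname{Tr}[\sqrt{A^\dagger A}]$. *)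

theory Defs
  imports "HOL-Analysis.Analysis"
begin

text \<open>Operators on a d-dimensional Hilbert space are complex matrices indexed by a
finite type 'n, with d = CARD('n).\<close>

definition adj :: "complex^'n^'n \<Rightarrow> complex^'n^'n" where
  "adj A = (\<chi> i j. cnj (A $ j $ i))"

definition hermitian :: "complex^'n^'n \<Rightarrow> bool" where
  "hermitian A \<longleftrightarrow> adj A = A"

definition psd :: "complex^'n^'n \<Rightarrow> bool" where
  "psd A \<longleftrightarrow> hermitian A \<and>
     (\<forall>v :: complex^'n. 0 \<le> Re (\<Sum>i\<in>UNIV. cnj (v $ i) * (A *v v) $ i))"

definition msqrt :: "complex^'n^'n \<Rightarrow> complex^'n^'n" where
  "msqrt A = (THE B. psd B \<and> B ** B = A)"

definition trace_norm :: "complex^'n^'n \<Rightarrow> real" where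
  "trace_norm A = Re (trace (msqrt (adj A ** A)))"

definition fidelity :: "complex^'n^'n \<Rightarrow> complex^'n^'n \<Rightarrow> real" where
  "fidelity \<rho> \<sigma> = (trace_norm (msqrt \<rho> ** msqrt \<sigma>))^2"

fun mpow :: "complex^'n^'n \<Rightarrow> nat \<Rightarrow> complex^'n^'n" where
  "mpow A 0 = mat 1"
| "mpow A (Suc k) = A ** mpow A k"

definition mexp :: "complex^'n^'n \<Rightarrow> complex^'n^'n" where
  "mexp A = (\<Sum>k. (1 / fact k :: real) *\<^sub>R mpow A k)"

definition mscale :: "complex \<Rightarrow> complex^'n^'n \<Rightarrow> complex^'n^'n" where
  "mscale c A = (\<chi> i j. c * A $ i $ j)"

end

theory Submission
  imports Defs
begin

text \<open>All operators involved are functions of the single spectral resolution of \<open>H\<close>,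
  so they commute and the fidelity reduces to the eigenvalues: it is the Boltzmann weight
  \<open>exp(-\<beta>\<lambda>\<^sub>1) d\<^sub>G / Z\<close> of the ground space, where
  \<open>Z = \<Sum>\<^sub>i exp(-\<beta>\<lambda>\<^sub>i) Tr \<Pi>\<^sub>i\<close>. Every excited level has weight at most
  \<open>exp(-\<beta>\<lambda>\<^sub>2)\<close>, and \<open>\<beta>\<close> is chosen so that
  \<open>exp(-\<beta>\<lambda>\<^sub>2) (d - d\<^sub>G) = \<epsilon>/(1 - \<epsilon>) exp(-\<beta>\<lambda>\<^sub>1) d\<^sub>G\<close>: the excited part
  of \<open>Z\<close> is at most \<open>\<epsilon>/(1 - \<epsilon>)\<close> times the ground part.\<close>

lemma scaleR_complex: "(r::real) *\<^sub>R (z::complex) = of_real r * z"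
  by (simp add: scaleR_conv_of_real)

lemma cnj_mult_self: "cnj z * z = of_real ((cmod z)\<^sup>2)"
  using complex_norm_square[of z] by (simp add: mult.commute power2_eq_square)

lemma matrix_mult_sum_left:
  "finite S \<Longrightarrow> (\<Sum>i\<in>S. f i) ** (B::complex^'n^'n) = (\<Sum>i\<in>S. f i ** B)"
  by (induction S rule: finite_induct)
    (auto simp: matrix_matrix_mult_def vec_eq_iff sum.distrib algebra_simps)

lemma matrix_mult_sum_right:
  "finite S \<Longrightarrow> (B::complex^'n^'n) ** (\<Sum>i\<in>S. f i) = (\<Sum>i\<in>S. B ** f i)"
  by (induction S rule: finite_induct) (simp_all add: matrix_add_ldistrib)

lemma matrix_vector_mult_sum_left:
  "finite S \<Longrightarrow> (\<Sum>i\<in>S. f i) *v (v::complex^'n) = (\<Sum>i\<in>S. f i *v v)"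
  by (induction S rule: finite_induct) (auto simp: matrix_vector_mult_add_rdistrib)

lemma matrix_vector_mult_scaleR_left:
  "((r::real) *\<^sub>R (A::complex^'n^'n)) *v v = r *\<^sub>R (A *v v)"
  by (simp add: matrix_vector_mult_def vec_eq_iff scaleR_sum_right)

lemma matrix_vector_mult_scaleR_right:
  "(A::complex^'n^'n) *v ((r::real) *\<^sub>R v) = r *\<^sub>R (A *v v)"
  by (simp add: matrix_vector_mult_def vec_eq_iff scaleR_complex sum_distrib_left mult_ac)

lemma matrix_vector_mult_sum_right:
  "finite S \<Longrightarrow> (A::complex^'n^'n) *v (\<Sum>i\<in>S. f i) = (\<Sum>i\<in>S. A *v f i)"
  by (induction S rule: finite_induct) (simp_all add: matrix_vector_right_distrib)

lemma trace_sum: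
  "finite S \<Longrightarrow> trace (\<Sum>i\<in>S. f i) = (\<Sum>i\<in>S. trace (f i :: complex^'n^'n))"
  by (induction S rule: finite_induct) (auto simp: trace_add trace_0[simplified])

lemma trace_scaleR: "trace ((r::real) *\<^sub>R (A::complex^'n^'n)) = of_real r * trace A"
  by (simp add: trace_def sum_distrib_left scaleR_complex)

lemma adj_sum:
  "finite S \<Longrightarrow> adj (\<Sum>i\<in>S. f i) = (\<Sum>i\<in>S. adj (f i :: complex^'n^'n))"
  by (induction S rule: finite_induct) (auto simp: adj_def vec_eq_iff sum_component)

lemma adj_scaleR: "adj ((r::real) *\<^sub>R (A::complex^'n^'n)) = r *\<^sub>R adj A"
  by (simp add: adj_def vec_eq_iff scaleR_complex)

lemma mscale_of_real: "mscale (of_real r) A = r *\<^sub>R A"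
  by (simp add: mscale_def vec_eq_iff scaleR_complex)

lemma trace_adj_mult_self:
  "trace (adj A ** A) = of_real (\<Sum>j\<in>UNIV. \<Sum>k\<in>UNIV. (cmod (A $ k $ j))\<^sup>2)"
  by (simp add: trace_def matrix_matrix_mult_def adj_def cnj_mult_self)

lemma trace_projection:
  fixes P :: "complex^'n^'n"
  assumes "hermitian P" "P ** P = P" "P \<noteq> 0"
  shows "trace P = of_real (Re (trace P))" "0 < Re (trace P)"
proof -
  define S where "S = (\<Sum>j\<in>UNIV. \<Sum>k\<in>UNIV. (cmod (P $ k $ j))\<^sup>2)"
  have tr: "trace P = of_real S"
    using trace_adj_mult_self[of P] assms(1,2) by (simp add: hermitian_def S_def)
  obtain k j where "P $ k $ j \<noteq> 0" using assms(3) by (auto simp: vec_eq_iff)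
  then have "0 < (cmod (P $ k $ j))\<^sup>2" by simp
  also have "\<dots> \<le> (\<Sum>k\<in>UNIV. (cmod (P $ k $ j))\<^sup>2)"
    by (rule member_le_sum) auto
  also have "\<dots> \<le> S" unfolding S_def
    by (rule member_le_sum[where f = "\<lambda>j. \<Sum>k\<in>UNIV. (cmod (P $ k $ j))\<^sup>2"])
      (auto intro: sum_nonneg)
  finally show "trace P = of_real (Re (trace P))" "0 < Re (trace P)"
    using tr by simp_all
qed

definition cinner :: "complex^'n \<Rightarrow> complex^'n \<Rightarrow> complex" where
  "cinner v w = (\<Sum>i\<in>UNIV. cnj (v $ i) * w $ i)"

lemma psd_iff_cinner:
  "psd A \<longleftrightarrow> hermitian A \<and> (\<forall>v. 0 \<le> Re (cinner v (A *v v)))"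
  by (simp add: psd_def cinner_def)

lemma cinner_adj: "cinner v ((A::complex^'n^'n) *v w) = cinner (adj A *v v) w"
proof -
  have "cinner v (A *v w) = (\<Sum>i\<in>UNIV. \<Sum>j\<in>UNIV. cnj (v$i) * A$i$j * w$j)"
    unfolding cinner_def matrix_vector_mult_def by (simp add: sum_distrib_left mult.assoc)
  also have "\<dots> = (\<Sum>j\<in>UNIV. \<Sum>i\<in>UNIV. cnj (v$i) * A$i$j * w$j)"
    by (rule sum.swap)
  also have "\<dots> = cinner (adj A *v v) w"
    unfolding cinner_def matrix_vector_mult_def adj_def
    by (simp add: sum_distrib_left sum_distrib_right mult_ac)
  finally show ?thesis .
qed

lemma cinner_self: "cinner v v = of_real (\<Sum>i\<in>UNIV. (cmod (v $ i))\<^sup>2)"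
  by (simp add: cinner_def cnj_mult_self)

lemma cinner_self_nonneg: "0 \<le> Re (cinner v v)"
  by (simp add: cinner_self sum_nonneg)

lemma cinner_self_eq_0: "Re (cinner v v) = 0 \<Longrightarrow> v = 0"
  by (simp add: cinner_self vec_eq_iff sum_nonneg_eq_0_iff)

lemma cinner_scaleR_right: "cinner v ((r::real) *\<^sub>R w) = of_real r * cinner v w"
  by (simp add: cinner_def sum_distrib_left scaleR_complex algebra_simps)

lemma cinner_sum_right:
  "finite S \<Longrightarrow> cinner v (\<Sum>i\<in>S. f i) = (\<Sum>i\<in>S. cinner v (f i))"
  by (induction S rule: finite_induct) (simp_all add: cinner_def sum.distrib algebra_simps)

text \<open>This is what makes the positive semidefinite square root unique.\<close>

lemma psd_mult_vec_eq_sqrt: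
  fixes B :: "complex^'n^'n"
  assumes psd: "psd B" and eigen: "B *v (B *v v) = \<mu> *\<^sub>R v" and "0 \<le> \<mu>"
  shows "B *v v = sqrt \<mu> *\<^sub>R v"
proof (cases "\<mu> = 0")
  case True
  have "cinner (B *v v) (B *v v) = cinner v (B *v (B *v v))"
    using psd by (simp add: cinner_adj psd_iff_cinner hermitian_def)
  also have "\<dots> = 0" using True eigen by (simp add: cinner_def)
  finally show ?thesis using True cinner_self_eq_0[of "B *v v"] by simp
next
  case False
  define s where "s = sqrt \<mu>"
  have s_pos: "0 < s" using False \<open>0 \<le> \<mu>\<close> by (simp add: s_def)
  define w where "w = B *v v - s *\<^sub>R v"
  \<comment> \<open>\<open>w\<close> is an eigenvector of \<open>B\<close> for the negative eigenvalue \<open>-s\<close>,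
    so positivity forces \<open>w = 0\<close>.\<close>
  have "B *v w = (s * s) *\<^sub>R v - s *\<^sub>R (B *v v)"
    using eigen \<open>0 \<le> \<mu>\<close>
    by (simp add: w_def s_def matrix_vector_mult_diff_distrib matrix_vector_mult_scaleR_right)
  also have "\<dots> = (- s) *\<^sub>R w" by (simp add: w_def algebra_simps)
  finally have Bw: "B *v w = (- s) *\<^sub>R w" .
  have "0 \<le> Re (cinner w (B *v w))" using psd by (simp add: psd_iff_cinner)
  also have "\<dots> = - s * Re (cinner w w)" by (simp only: Bw cinner_scaleR_right) simp
  finally have "0 \<le> - s * Re (cinner w w)" .
  then have "Re (cinner w w) = 0"
    using s_pos cinner_self_nonneg[of w] by (simp add: mult_le_0_iff)
  then have "w = 0" by (rule cinner_self_eq_0)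
  then show ?thesis by (simp add: w_def s_def)
qed

section \<open>Functions of a spectral resolution\<close>

locale spectral_resolution =
  fixes P :: "nat \<Rightarrow> complex^'n^'n" and M :: nat
  assumes hermitian_P: "\<And>i. i \<in> {1..M} \<Longrightarrow> hermitian (P i)"
    and idempotent_P: "\<And>i. i \<in> {1..M} \<Longrightarrow> P i ** P i = P i"
    and nonzero_P: "\<And>i. i \<in> {1..M} \<Longrightarrow> P i \<noteq> 0"
    and orthogonal_P: "\<And>i j. i \<in> {1..M} \<Longrightarrow> j \<in> {1..M} \<Longrightarrow> i \<noteq> j \<Longrightarrow> P i ** P j = 0"
    and sum_P: "(\<Sum>i=1..M. P i) = mat 1"
begin

definition spectral_sum :: "(nat \<Rightarrow> real) \<Rightarrow> complex^'n^'n" where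
  "spectral_sum \<mu> = (\<Sum>i=1..M. \<mu> i *\<^sub>R P i)"

definition proj_dim :: "nat \<Rightarrow> real" where
  "proj_dim i = Re (trace (P i))"

lemma proj_dim_pos: "i \<in> {1..M} \<Longrightarrow> 0 < proj_dim i"
  unfolding proj_dim_def by (rule trace_projection(2)[OF hermitian_P idempotent_P nonzero_P])

lemma trace_P: "i \<in> {1..M} \<Longrightarrow> trace (P i) = of_real (proj_dim i)"
  unfolding proj_dim_def by (rule trace_projection(1)[OF hermitian_P idempotent_P nonzero_P])

lemma sum_proj_dim: "(\<Sum>i=1..M. proj_dim i) = real CARD('n)"
proof -
  have "trace (mat 1 :: complex^'n^'n) = (\<Sum>i=1..M. trace (P i))"
    unfolding sum_P[symmetric] by (rule trace_sum) simp
  then have "Re (trace (mat 1 :: complex^'n^'n)) = (\<Sum>i=1..M. proj_dim i)"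
    by (simp add: proj_dim_def Re_sum)
  then show ?thesis by (simp add: trace_I)
qed

lemma spectral_sum_cong:
  "(\<And>i. i \<in> {1..M} \<Longrightarrow> \<mu> i = \<nu> i) \<Longrightarrow> spectral_sum \<mu> = spectral_sum \<nu>"
  unfolding spectral_sum_def by (rule sum.cong) auto

lemma spectral_sum_one: "spectral_sum (\<lambda>i. 1) = mat 1"
  using sum_P by (simp add: spectral_sum_def)

lemma spectral_sum_indicator:
  assumes "k \<in> {1..M}"
  shows "spectral_sum (\<lambda>i. if i = k then 1 else 0) = P k"
proof -
  have "spectral_sum (\<lambda>i. if i = k then 1 else 0) = (\<Sum>i=1..M. if i = k then P k else 0)"
    unfolding spectral_sum_def by (rule sum.cong) auto
  also have "\<dots> = P k" using assms by simp
  finally show ?thesis .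
qed

lemma scaleR_spectral_sum: "r *\<^sub>R spectral_sum \<mu> = spectral_sum (\<lambda>i. r * \<mu> i)"
  by (simp add: spectral_sum_def scaleR_sum_right)

lemma spectral_sum_mult_P:
  assumes "k \<in> {1..M}"
  shows "spectral_sum \<mu> ** P k = \<mu> k *\<^sub>R P k"
proof -
  have "spectral_sum \<mu> ** P k = (\<Sum>i=1..M. \<mu> i *\<^sub>R (P i ** P k))"
    by (simp add: spectral_sum_def matrix_mult_sum_left scalar_matrix_assoc)
  also have "\<dots> = (\<Sum>i=1..M. if i = k then \<mu> k *\<^sub>R P k else 0)"
    by (rule sum.cong) (use assms idempotent_P orthogonal_P in auto)
  also have "\<dots> = \<mu> k *\<^sub>R P k" using assms by simp
  finally show ?thesis .
qed

lemma spectral_sum_mult: "spectral_sum \<mu> ** spectral_sum \<nu> = spectral_sum (\<lambda>i. \<mu> i * \<nu> i)"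
proof -
  have "spectral_sum \<mu> ** spectral_sum \<nu> = (\<Sum>i=1..M. \<nu> i *\<^sub>R (spectral_sum \<mu> ** P i))"
    by (simp add: spectral_sum_def[of \<nu>] matrix_mult_sum_right matrix_scalar_ac scalar_matrix_assoc)
  also have "\<dots> = (\<Sum>i=1..M. (\<mu> i * \<nu> i) *\<^sub>R P i)"
    by (rule sum.cong) (auto simp: spectral_sum_mult_P)
  finally show ?thesis by (simp add: spectral_sum_def)
qed

lemma adj_spectral_sum: "adj (spectral_sum \<mu>) = spectral_sum \<mu>"
  using hermitian_P by (simp add: spectral_sum_def adj_sum adj_scaleR hermitian_def)

lemma trace_spectral_sum:
  "trace (spectral_sum \<mu>) = of_real (\<Sum>i=1..M. \<mu> i * proj_dim i)"
proof -
  have "trace (spectral_sum \<mu>) = (\<Sum>i=1..M. of_real (\<mu> i * proj_dim i))"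
    unfolding spectral_sum_def trace_sum[OF finite_atLeastAtMost]
    by (rule sum.cong) (simp_all add: trace_scaleR trace_P)
  then show ?thesis by simp
qed

lemma psd_spectral_sum:
  assumes nonneg: "\<And>i. i \<in> {1..M} \<Longrightarrow> 0 \<le> \<mu> i"
  shows "psd (spectral_sum \<mu>)"
proof -
  have "0 \<le> Re (cinner v (spectral_sum \<mu> *v v))" for v
  proof -
    have "cinner v (P i *v v) = cinner (P i *v v) (P i *v v)" if "i \<in> {1..M}" for i
      using that hermitian_P idempotent_P
      by (metis cinner_adj hermitian_def matrix_vector_mul_assoc)
    then have "cinner v (spectral_sum \<mu> *v v)
        = (\<Sum>i=1..M. of_real (\<mu> i) * cinner (P i *v v) (P i *v v))"
      by (simp add: spectral_sum_def matrix_vector_mult_sum_left cinner_sum_right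
          cinner_scaleR_right matrix_vector_mult_scaleR_left)
    then show ?thesis
      by (auto simp: Re_sum nonneg cinner_self_nonneg intro!: sum_nonneg)
  qed
  then show ?thesis by (simp add: psd_iff_cinner hermitian_def adj_spectral_sum)
qed

lemma msqrt_spectral_sum:
  assumes nonneg: "\<And>i. i \<in> {1..M} \<Longrightarrow> 0 \<le> \<mu> i"
  shows "msqrt (spectral_sum \<mu>) = spectral_sum (\<lambda>i. sqrt (\<mu> i))"
  unfolding msqrt_def
proof (rule the_equality)
  show "psd (spectral_sum (\<lambda>i. sqrt (\<mu> i))) \<and>
      spectral_sum (\<lambda>i. sqrt (\<mu> i)) ** spectral_sum (\<lambda>i. sqrt (\<mu> i)) = spectral_sum \<mu>"
    using nonneg by (auto simp: spectral_sum_mult intro: psd_spectral_sum spectral_sum_cong)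
next
  fix B assume B: "psd B \<and> B ** B = spectral_sum \<mu>"
  have "B *v (P i *v v) = spectral_sum (\<lambda>i. sqrt (\<mu> i)) *v (P i *v v)"
    if i: "i \<in> {1..M}" for i v
  proof -
    have "B *v (B *v (P i *v v)) = (B ** B) *v (P i *v v)"
      by (rule matrix_vector_mul_assoc)
    also have "\<dots> = (spectral_sum \<mu> ** P i) *v v"
      using B by (simp add: matrix_vector_mul_assoc)
    also have "\<dots> = \<mu> i *\<^sub>R (P i *v v)"
      by (simp add: spectral_sum_mult_P[OF i] matrix_vector_mult_scaleR_left)
    finally have eigen: "B *v (B *v (P i *v v)) = \<mu> i *\<^sub>R (P i *v v)" .
    have "B *v (P i *v v) = sqrt (\<mu> i) *\<^sub>R (P i *v v)"
      by (rule psd_mult_vec_eq_sqrt[OF _ eigen nonneg[OF i]]) (use B in blast)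
    moreover have "spectral_sum (\<lambda>i. sqrt (\<mu> i)) *v (P i *v v) = sqrt (\<mu> i) *\<^sub>R (P i *v v)"
      by (simp add: matrix_vector_mul_assoc spectral_sum_mult_P[OF i]
          matrix_vector_mult_scaleR_left)
    ultimately show ?thesis by simp
  qed
  then have "B *v (\<Sum>i=1..M. P i *v v)
      = spectral_sum (\<lambda>i. sqrt (\<mu> i)) *v (\<Sum>i=1..M. P i *v v)" for v by (simp add: matrix_vector_mult_sum_right)
  moreover have "(\<Sum>i=1..M. P i *v v) = v" for v
    using sum_P by (simp flip: matrix_vector_mult_sum_left)
  ultimately have "B *v v = spectral_sum (\<lambda>i. sqrt (\<mu> i)) *v v" for v
    by metis
  then show "B = spectral_sum (\<lambda>i. sqrt (\<mu> i))" by (simp add: matrix_eq)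
qed

lemma mexp_spectral_sum: "mexp (spectral_sum \<mu>) = spectral_sum (\<lambda>i. exp (\<mu> i))"
proof -
  have mpow: "mpow (spectral_sum \<mu>) k = spectral_sum (\<lambda>i. \<mu> i ^ k)" for k
    by (induction k) (simp_all add: spectral_sum_one[symmetric] spectral_sum_mult)
  have "(\<lambda>k. (1 / fact k :: real) *\<^sub>R mpow (spectral_sum \<mu>) k)
      = (\<lambda>k. \<Sum>i=1..M. (\<mu> i ^ k / fact k) *\<^sub>R P i)"
    by (simp only: mpow) (simp add: spectral_sum_def scaleR_sum_right)
  moreover have "(\<lambda>k. \<Sum>i=1..M. (\<mu> i ^ k / fact k) *\<^sub>R P i) sums spectral_sum (\<lambda>i. exp (\<mu> i))"
    unfolding spectral_sum_def
  proof (intro sums_sum sums_scaleR_left)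
    show "(\<lambda>n. \<mu> i ^ n / fact n) sums exp (\<mu> i)" for i
      using exp_converges[of "\<mu> i"] by (simp add: divide_inverse mult.commute)
  qed
  ultimately show ?thesis unfolding mexp_def by (simp add: sums_iff)
qed

lemma trace_norm_spectral_sum:
  "trace_norm (spectral_sum \<mu>) = (\<Sum>i=1..M. \<bar>\<mu> i\<bar> * proj_dim i)"
proof -
  have "msqrt (adj (spectral_sum \<mu>) ** spectral_sum \<mu>) = spectral_sum (\<lambda>i. \<bar>\<mu> i\<bar>)"
    by (simp add: adj_spectral_sum spectral_sum_mult msqrt_spectral_sum)
  then show ?thesis by (simp add: trace_norm_def trace_spectral_sum)
qed

lemma fidelity_spectral_sum:
  assumes "\<And>i. i \<in> {1..M} \<Longrightarrow> 0 \<le> \<mu> i" "\<And>i. i \<in> {1..M} \<Longrightarrow> 0 \<le> \<nu> i"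
  shows "fidelity (spectral_sum \<mu>) (spectral_sum \<nu>)
    = (\<Sum>i=1..M. sqrt (\<mu> i * \<nu> i) * proj_dim i)\<^sup>2"
proof -
  have "msqrt (spectral_sum \<mu>) = spectral_sum (\<lambda>i. sqrt (\<mu> i))"
    by (rule msqrt_spectral_sum) (rule assms(1))
  moreover have "msqrt (spectral_sum \<nu>) = spectral_sum (\<lambda>i. sqrt (\<nu> i))"
    by (rule msqrt_spectral_sum) (rule assms(2))
  ultimately have "fidelity (spectral_sum \<mu>) (spectral_sum \<nu>)
      = (trace_norm (spectral_sum (\<lambda>i. sqrt (\<mu> i * \<nu> i))))\<^sup>2"
    by (simp add: fidelity_def spectral_sum_mult real_sqrt_mult)
  also have "\<dots> = (\<Sum>i=1..M. \<bar>sqrt (\<mu> i * \<nu> i)\<bar> * proj_dim i)\<^sup>2"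
    by (simp only: trace_norm_spectral_sum)
  also have "\<dots> = (\<Sum>i=1..M. sqrt (\<mu> i * \<nu> i) * proj_dim i)\<^sup>2"
  proof -
    have "\<bar>sqrt (\<mu> i * \<nu> i)\<bar> = sqrt (\<mu> i * \<nu> i)" if "i \<in> {1..M}" for i
      using assms[OF that] by (intro abs_of_nonneg real_sqrt_ge_zero mult_nonneg_nonneg)
    then show ?thesis by (simp only: cong: sum.cong)
  qed
  finally show ?thesis .
qed

lemma normalize_spectral_sum:
  "mscale (1 / trace (spectral_sum \<mu>)) (spectral_sum \<mu>)
    = spectral_sum (\<lambda>i. \<mu> i / (\<Sum>j=1..M. \<mu> j * proj_dim j))"
proof -
  have "1 / trace (spectral_sum \<mu>) = of_real (1 / (\<Sum>j=1..M. \<mu> j * proj_dim j))"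
    unfolding trace_spectral_sum by (simp only: of_real_divide of_real_1)
  then have "mscale (1 / trace (spectral_sum \<mu>)) (spectral_sum \<mu>)
      = (1 / (\<Sum>j=1..M. \<mu> j * proj_dim j)) *\<^sub>R spectral_sum \<mu>"
    by (simp only: mscale_of_real)
  also have "\<dots> = spectral_sum (\<lambda>i. \<mu> i / (\<Sum>j=1..M. \<mu> j * proj_dim j))"
    by (simp add: scaleR_spectral_sum)
  finally show ?thesis .
qed

lemma fidelity_normalized_projection:
  assumes nonneg: "\<And>i. i \<in> {1..M} \<Longrightarrow> 0 \<le> \<mu> i" and k: "k \<in> {1..M}"
  shows "fidelity (mscale (1 / trace (spectral_sum \<mu>)) (spectral_sum \<mu>))
      (mscale (1 / trace (P k)) (P k)) = \<mu> k * proj_dim k / (\<Sum>i=1..M. \<mu> i * proj_dim i)"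
proof -
  define Z where "Z = (\<Sum>i=1..M. \<mu> i * proj_dim i)"
  define ind where "ind = (\<lambda>i. if i = k then 1 else 0 :: real)"
  have "0 \<le> Z"
    unfolding Z_def by (intro sum_nonneg mult_nonneg_nonneg nonneg less_imp_le proj_dim_pos)
  have "(\<Sum>i=1..M. ind i * proj_dim i) = (\<Sum>i=1..M. if i = k then proj_dim k else 0)"
    by (rule sum.cong) (auto simp: ind_def)
  also have "\<dots> = proj_dim k"
    using k by simp
  finally have ind_sum: "(\<Sum>i=1..M. ind i * proj_dim i) = proj_dim k" .
  have ind_P: "spectral_sum ind = P k"
    unfolding ind_def by (rule spectral_sum_indicator[OF k])
  have "mscale (1 / trace (P k)) (P k) = spectral_sum (\<lambda>i. ind i / proj_dim k)"
    using normalize_spectral_sum[of ind] unfolding ind_P ind_sum .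
  moreover have "mscale (1 / trace (spectral_sum \<mu>)) (spectral_sum \<mu>)
      = spectral_sum (\<lambda>i. \<mu> i / Z)"
    unfolding Z_def by (rule normalize_spectral_sum)
  moreover have "fidelity (spectral_sum (\<lambda>i. \<mu> i / Z)) (spectral_sum (\<lambda>i. ind i / proj_dim k))
      = (\<Sum>i=1..M. sqrt (\<mu> i / Z * (ind i / proj_dim k)) * proj_dim i)\<^sup>2"
    using nonneg \<open>0 \<le> Z\<close> proj_dim_pos[OF k]
    by (intro fidelity_spectral_sum) (simp_all add: ind_def)
  moreover have "(\<Sum>i=1..M. sqrt (\<mu> i / Z * (ind i / proj_dim k)) * proj_dim i)
      = (\<Sum>i=1..M. if i = k then sqrt (\<mu> k / Z / proj_dim k) * proj_dim k else 0)"
    by (rule sum.cong) (auto simp: ind_def)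
  moreover have "(sqrt (\<mu> k / Z / proj_dim k) * proj_dim k)\<^sup>2 = \<mu> k * proj_dim k / Z"
    using nonneg[OF k] \<open>0 \<le> Z\<close> proj_dim_pos[OF k]
    by (simp add: power_mult_distrib) (simp add: power2_eq_square)
  ultimately show ?thesis using k by (simp add: Z_def)
qed

end

section \<open>The Boltzmann weight of the ground level\<close>

lemma boltzmann_ground_weight_ge:
  fixes E t :: "nat \<Rightarrow> real" and \<beta> \<epsilon> :: real
  assumes M: "2 \<le> M" and t_pos: "\<And>i. i \<in> {1..M} \<Longrightarrow> 0 < t i"
    and incr: "strict_mono_on {1..M} E"
    and \<epsilon>: "0 < \<epsilon>" "\<epsilon> < 1" and "0 \<le> \<beta>"
    and \<beta>: "\<beta> * (E 2 - E 1) = ln ((1 - \<epsilon>) / \<epsilon> * ((\<Sum>i=2..M. t i) / t 1))"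
  shows "1 - \<epsilon> \<le> exp (- \<beta> * E 1) * t 1 / (\<Sum>i=1..M. exp (- \<beta> * E i) * t i)"
proof -
  define e where "e i = exp (- \<beta> * E i)" for i
  define D where "D = (\<Sum>i=2..M. t i)"
  define S where "S = (\<Sum>i=2..M. e i * t i)"
  have t1: "0 < t 1" using M t_pos by simp
  have "0 < D" unfolding D_def using M t_pos by (intro sum_pos) auto
  have "exp (\<beta> * (E 2 - E 1)) = (1 - \<epsilon>) / \<epsilon> * (D / t 1)"
    using \<beta> \<epsilon> t1 \<open>0 < D\<close> by (simp add: D_def)
  moreover have "e 2 * exp (\<beta> * (E 2 - E 1)) = e 1"
    by (simp add: e_def flip: exp_add) (simp add: algebra_simps)
  ultimately have e2: "e 2 * ((1 - \<epsilon>) * D) = \<epsilon> * (e 1 * t 1)"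
    using \<epsilon> t1 by (simp add: field_simps)
  have "S \<le> e 2 * D"
    unfolding S_def D_def sum_distrib_left
  proof (rule sum_mono)
    fix i assume i: "i \<in> {2..M}"
    then have "E 2 \<le> E i"
      using incr M by (cases "i = 2") (auto simp: strict_mono_on_def intro: less_imp_le)
    then have "e i \<le> e 2" using \<open>0 \<le> \<beta>\<close> by (simp add: e_def mult_left_mono)
    then show "e i * t i \<le> e 2 * t i" using i t_pos by (simp add: mult_right_mono)
  qed
  then have "(1 - \<epsilon>) * S \<le> (1 - \<epsilon>) * (e 2 * D)"
    using \<epsilon> by (intro mult_left_mono) auto
  then have "(1 - \<epsilon>) * S \<le> \<epsilon> * (e 1 * t 1)"
    using e2 by (simp add: algebra_simps)
  then have "(1 - \<epsilon>) * (e 1 * t 1 + S) \<le> e 1 * t 1"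
    by (simp add: algebra_simps)
  moreover have "(\<Sum>i=1..M. e i * t i) = e 1 * t 1 + S"
    unfolding S_def using M by (simp add: sum.atLeast_Suc_atMost numeral_2_eq_2)
  moreover have "0 < e 1 * t 1 + S"
    unfolding S_def e_def using t1 t_pos
    by (intro add_pos_nonneg sum_nonneg mult_nonneg_nonneg less_imp_le) auto
  ultimately have "1 - \<epsilon> \<le> e 1 * t 1 / (\<Sum>i=1..M. e i * t i)"
    by (simp add: pos_le_divide_eq)
  then show ?thesis by (simp add: e_def)
qed

theorem corollary2:
  fixes H :: "complex^'n^'n"
    and lam :: "nat \<Rightarrow> real"
    and P :: "nat \<Rightarrow> complex^'n^'n"
    and M :: nat and \<epsilon> \<beta> :: real
  assumes herm: "hermitian H"
    and M2: "M \<ge> 2"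
    and proj: "\<forall>i\<in>{1..M}. hermitian (P i) \<and> P i ** P i = P i \<and> P i \<noteq> 0"
    and orth: "\<forall>i\<in>{1..M}. \<forall>j\<in>{1..M}. i \<noteq> j \<longrightarrow> P i ** P j = 0"
    and compl: "(\<Sum>i=1..M. P i) = mat 1"
    and incr: "strict_mono_on {1..M} lam"
    and decomp: "H = (\<Sum>i=1..M. lam i *\<^sub>R P i)"
    and eps: "0 < \<epsilon>" "\<epsilon> < 1"
    and beta: "\<beta> = (1 / (lam 2 - lam 1)) *
        ln (((1 - \<epsilon>) / \<epsilon>) * ((real CARD('n) - Re (trace (P 1))) / Re (trace (P 1))))"
    and beta_nonneg: "\<beta> \<ge> 0"
  shows "fidelity (mscale (1 / trace (mexp ((- \<beta>) *\<^sub>R H))) (mexp ((- \<beta>) *\<^sub>R H)))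
                  (mscale (1 / trace (P 1)) (P 1)) \<ge> 1 - \<epsilon>"
proof -
  interpret spectral_resolution P M
    using proj orth compl by unfold_locales auto
  have one: "1 \<in> {1..M}" and two: "2 \<in> {1..M}" using M2 by auto
  have "(- \<beta>) *\<^sub>R H = spectral_sum (\<lambda>i. - \<beta> * lam i)"
    unfolding decomp spectral_sum_def by (simp add: scaleR_sum_right)
  then have "mexp ((- \<beta>) *\<^sub>R H) = spectral_sum (\<lambda>i. exp (- \<beta> * lam i))"
    by (simp add: mexp_spectral_sum)
  then have fid: "fidelity (mscale (1 / trace (mexp ((- \<beta>) *\<^sub>R H))) (mexp ((- \<beta>) *\<^sub>R H)))
      (mscale (1 / trace (P 1)) (P 1))
      = exp (- \<beta> * lam 1) * proj_dim 1 / (\<Sum>i=1..M. exp (- \<beta> * lam i) * proj_dim i)"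
    using fidelity_normalized_projection[OF _ one] by simp
  have "real CARD('n) - proj_dim 1 = (\<Sum>i=2..M. proj_dim i)"
    using sum_proj_dim M2 by (simp add: sum.atLeast_Suc_atMost numeral_2_eq_2)
  moreover have "0 < lam 2 - lam 1"
    using incr one two by (simp add: strict_mono_on_def)
  ultimately have gap:
      "\<beta> * (lam 2 - lam 1) = ln ((1 - \<epsilon>) / \<epsilon> * ((\<Sum>i=2..M. proj_dim i) / proj_dim 1))"
    using beta by (simp add: proj_dim_def)
  show ?thesis
    unfolding fid
    by (rule boltzmann_ground_weight_ge[OF M2 _ incr eps beta_nonneg gap]) (rule proj_dim_pos)
qed

end
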